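(* Let $a,b>0$ and $N\ge1$. For $j=0,1,2,\ldots$ put $$\varphi_j^{(4)}(x)=\frac{P_j^{(a-1,b-1)}(x)}{\sqrt{h_j^{(a-1,b-1)}}}(1-x)^{\frac a2-1}(1+x)^{\frac b2-1},\qquad x\in(-1,1),$$ and define $$\psi_{2j+1}^{(4)}(x)=\frac{1}{\sqrt2}(1-x^2)\varphi_{2j+1}^{(4)}(x),\qquad \psi_{2j}^{(4)}(x)=-\frac{1}{\sqrt2}\,\varepsilon\varphi_{2j+1}^{(4)}(x).$$ Let $M^{(4)}$ be the $2N\times 2N$ matrix with entries $M^{(4)}_{jk}=\int_{-1}^1\big(\psi_j^{(4)}(x)\frac{d}{dx}\psi_k^{(4)}(x)-\psi_k^{(4)}(x)\frac{d}{dx}\psi_j^{(4)}(x)\big)dx$, $j,k=0,\ldots,2N-1$, let $(\mu_{jk})_{j,k=0}^{2N-1}=(M^{(4)})^{-1}$, and $$K_N^{(4)}(x,y)=-\sum_{j,k=0}^{2N-1}\mu_{jk}\psi_j^{(4)}(x)\frac{d}{dy}\psi_k^{(4)}(y).$$ Then $$K_N^{(4)}(x,y)=\frac12S_N^{(4)}(x,y)+\frac12C_{2N}^{(4)}\,\varepsilon\varphi_{2N+1}^{(4)}(x)\,\varphi_{2N}^{(4)}(y),$$ where $$C_{2N}^{(4)}=\sqrt{\frac{(2N+1)(2N+a)(2N+b)(2N+a+b-1)}{(4N+a+b+1)(4N+a+b-1)}},\qquad S_N^{(4)}(x,y)=\sum_{j=0}^{2N}(1-x^2)\varphi_j^{(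4)}(x)\varphi_j^{(4)}(y).$$
   Context: $P_j^{(\alpha,\beta)}$ is the Jacobi polynomial of degree $j$ (Szegő normalization) with $\int_{-1}^1P_j^{(\alpha,\beta)}P_k^{(\alpha,\beta)}(1-x)^{\alpha}(1+x)^{\beta}dx=h_j^{(\alpha,\beta)}\delta_{jk}$, $h_j^{(\alpha,\beta)}=\frac{2^{\alpha+\beta+1}\Gamma(j+\alpha+1)\Gamma(j+\beta+1)}{j!(2j+\alpha+\beta+1)\Gamma(j+\alpha+\beta+1)}$. The operator $\varepsilon$ acts on integrable functions $g$ on $[-1,1]$ by $\varepsilon g(x)=\int_{-1}^1\frac12\mathrm{sgn}(x-y)g(y)\,dy=\frac12\left(\int_{-1}^x g(y)dy-\int_x^1 g(y)dy\right)$. *)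

theory Defs
  imports "HOL-Analysis.Analysis"
begin

text \<open>Jacobi polynomial, Szego normalization (explicit sum, Szego (4.3.2)).\<close>
definition jacobiP :: "nat \<Rightarrow> real \<Rightarrow> real \<Rightarrow> real \<Rightarrow> real" where
  "jacobiP n al be x =
     (\<Sum>s\<le>n. ((real n + al) gchoose (n - s)) * ((real n + be) gchoose s)
              * ((x - 1) / 2) ^ s * ((x + 1) / 2) ^ (n - s))"

definition jacobi_h :: "nat \<Rightarrow> real \<Rightarrow> real \<Rightarrow> real" where
  "jacobi_h j al be =
     (LBINT x=ereal (-1)..ereal 1. (jacobiP j al be x)\<^sup>2 * (1 - x) powr al * (1 + x) powr be)"

definition eps_op :: "(real \<Rightarrow> real) \<Rightarrow> real \<Rightarrow> real" where
  "eps_op g x = (1/2) * ((LBINT y=ereal (-1)..ereal x. g y) - (LBINT y=ereal x..ereal 1. g y))"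

definition phi4 :: "real \<Rightarrow> real \<Rightarrow> nat \<Rightarrow> real \<Rightarrow> real" where
  "phi4 a b j x = jacobiP j (a - 1) (b - 1) x / sqrt (jacobi_h j (a - 1) (b - 1))
                  * (1 - x) powr (a / 2 - 1) * (1 + x) powr (b / 2 - 1)"

definition psi4 :: "real \<Rightarrow> real \<Rightarrow> nat \<Rightarrow> real \<Rightarrow> real" where
  "psi4 a b n x =
     (if odd n then (1 / sqrt 2) * (1 - x\<^sup>2) * phi4 a b n x
      else - (1 / sqrt 2) * eps_op (phi4 a b (n + 1)) x)"

definition M4 :: "real \<Rightarrow> real \<Rightarrow> nat \<Rightarrow> nat \<Rightarrow> real" where
  "M4 a b j k = (LBINT x=ereal (-1)..ereal 1.
        psi4 a b j x * deriv (psi4 a b k) x - psi4 a b k x * deriv (psi4 a b j) x)"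

definition is_inverse_matrix :: "nat \<Rightarrow> (nat \<Rightarrow> nat \<Rightarrow> real) \<Rightarrow> (nat \<Rightarrow> nat \<Rightarrow> real) \<Rightarrow> bool" where
  "is_inverse_matrix n A mu \<longleftrightarrow>
     (\<forall>i<n. \<forall>l<n. (\<Sum>k<n. A i k * mu k l) = (if i = l then 1 else 0)) \<and>
     (\<forall>i<n. \<forall>l<n. (\<Sum>k<n. mu i k * A k l) = (if i = l then 1 else 0))"

definition K4 :: "real \<Rightarrow> real \<Rightarrow> nat \<Rightarrow> (nat \<Rightarrow> nat \<Rightarrow> real) \<Rightarrow> real \<Rightarrow> real \<Rightarrow> real" where
  "K4 a b N mu x y = - (\<Sum>j<2*N. \<Sum>k<2*N. mu j k * psi4 a b j x * deriv (psi4 a b k) y)"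

definition C4 :: "real \<Rightarrow> real \<Rightarrow> nat \<Rightarrow> real" where
  "C4 a b N = sqrt ((2*N+1) * (2*N+a) * (2*N+b) * (2*N+a+b-1)
                    / ((4*N+a+b+1) * (4*N+a+b-1)))"

definition S4 :: "real \<Rightarrow> real \<Rightarrow> nat \<Rightarrow> real \<Rightarrow> real \<Rightarrow> real" where
  "S4 a b N x y = (\<Sum>j\<le>2*N. (1 - x\<^sup>2) * phi4 a b j x * phi4 a b j y)"

end

theory Submission
  imports Defs "HOL-Computational_Algebra.Polynomial"
begin

text \<open>
  All functions involved have the form w_{s,t}(x) p(x) with the Jacobi weight
  w_{s,t}(x) = (1-x)^s (1+x)^t and a polynomial p, and differentiation acts by
  (w_{s,t} p)' = w_{s-1,t-1} D_{s,t} p, where D_{s,t} p = (1-x^2) p' + (t(1-x) - s(1+x)) p.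
  Integration by parts against w_{a-1,b-1} makes D = D_{a/2,b/2} skew-symmetric, so in the
  orthonormal Jacobi basis p_n (the polynomial parts of phi_n) it is tridiagonal,
  D p_n = c_n p_{n+1} - c_{n-1} p_{n-1}, with constants c_n < 0 computed from the leading
  coefficients and norms of the Jacobi polynomials; in particular C_{2N} = -c_{2N}.
  The polynomial part of eps phi_{2i+1} is the solution q_i of D q_i = p_{2i+1} obtained by
  inverting this recurrence. Consequently M is the standard symplectic matrix J, its inverse is -J,
  the kernel is the sum of the N blocks psi_{2i}(x) psi'_{2i+1}(y) - psi_{2i+1}(x) psi'_{2i}(y), and
  since p_{2m} = c_{2m} q_m - c_{2m-1} q_{m-1} this sum telescopes to S_N/2 plus the boundary term.
\<close>

section \<open>The Jacobi weight\<close>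

definition jacobi_weight :: "real \<Rightarrow> real \<Rightarrow> real \<Rightarrow> real" where
  "jacobi_weight s t x = (1 - x) powr s * (1 + x) powr t"

lemma jacobi_weight_measurable [measurable]: "jacobi_weight s t \<in> borel_measurable borel"
  unfolding jacobi_weight_def by measurable

lemma jacobi_weight_nonneg: "0 \<le> jacobi_weight s t x"
  by (simp add: jacobi_weight_def)

lemma jacobi_weight_mult:
  "-1 < x \<Longrightarrow> x < 1 \<Longrightarrow> jacobi_weight s t x * jacobi_weight s' t' x = jacobi_weight (s + s') (t + t') x"
  by (simp add: jacobi_weight_def powr_add)

lemma jacobi_weight_times_1mx:
  "-1 < x \<Longrightarrow> x < 1 \<Longrightarrow> jacobi_weight s t x * (1 - x) = jacobi_weight (s + 1) t x"
  by (simp add: jacobi_weight_def powr_add)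

lemma jacobi_weight_times_1px:
  "-1 < x \<Longrightarrow> x < 1 \<Longrightarrow> jacobi_weight s t x * (1 + x) = jacobi_weight s (t + 1) x"
  by (simp add: jacobi_weight_def powr_add)

lemma jacobi_weight_times_1mx2:
  assumes "-1 < x" "x < 1"
  shows "jacobi_weight s t x * (1 - x\<^sup>2) = jacobi_weight (s + 1) (t + 1) x"
proof -
  have "jacobi_weight s t x * (1 - x\<^sup>2) = jacobi_weight s t x * (1 - x) * (1 + x)"
    by (simp add: power2_eq_square algebra_simps)
  then show ?thesis
    using assms by (simp add: jacobi_weight_times_1mx jacobi_weight_times_1px)
qed

lemma has_real_derivative_jacobi_weight_mult:
  assumes x: "-1 < x" "x < 1" and g: "(g has_real_derivative g') (at x)"
  shows "((\<lambda>x. jacobi_weight s t x * g x) has_real_derivative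
           jacobi_weight (s - 1) (t - 1) x * ((1 - x\<^sup>2) * g' + (t * (1 - x) - s * (1 + x)) * g x)) (at x)"
proof -
  have "((\<lambda>x. (1 - x) powr s * (1 + x) powr t * g x) has_real_derivative
      (1 - x) powr s * (1 + x) powr t * g'
      + ((1 - x) powr s * (t * (1 + x) powr (t - 1)) - s * (1 - x) powr (s - 1) * (1 + x) powr t) * g x) (at x)"
    using x by (auto intro!: derivative_eq_intros g)
  moreover have "(1 - x) powr s = (1 - x) powr (s - 1) * (1 - x)" "(1 + x) powr t = (1 + x) powr (t - 1) * (1 + x)"
    using x powr_add[of "1 - x" "s - 1" 1] powr_add[of "1 + x" "t - 1" 1] by simp_all
  ultimately show ?thesis
    unfolding jacobi_weight_def by (simp add: power2_eq_square algebra_simps)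
qed

lemma jacobi_weight_mult_tendsto_left_end:
  assumes "t > 0" "(g \<longlongrightarrow> L) (at_right (-1))"
  shows "((\<lambda>x. jacobi_weight s t x * g x) \<longlongrightarrow> 0) (at_right (-1))"
proof -
  have "((\<lambda>x. (1 - x) powr s * (1 + x) powr t * g x) \<longlongrightarrow> 2 powr s * 0 powr t * L) (at_right (-1))"
    using assms
    by (intro tendsto_intros tendsto_powr') (auto intro!: tendsto_eq_intros eventually_at_rightI[where b=0])
  then show ?thesis unfolding jacobi_weight_def using assms by simp
qed

lemma jacobi_weight_mult_tendsto_right_end:
  assumes "s > 0" "(g \<longlongrightarrow> L) (at_left 1)"
  shows "((\<lambda>x. jacobi_weight s t x * g x) \<longlongrightarrow> 0) (at_left 1)"
proof -
  have "((\<lambda>x. (1 - x) powr s * (1 + x) powr t * g x) \<longlongrightarrow> 0 powr s * 2 powr t * L) (at_left 1)"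
    using assms
    by (intro tendsto_intros tendsto_powr') (auto intro!: tendsto_eq_intros eventually_at_leftI[where a=0])
  then show ?thesis unfolding jacobi_weight_def using assms by simp
qed

lemma set_integrable_1px_powr:
  assumes "t > -1"
  shows "set_integrable lborel {-1<..<1::real} (\<lambda>x. (1 + x) powr t)"
proof -
  have "set_integrable lborel (einterval (ereal (-1)) (ereal 1)) (\<lambda>x. (1 + x) powr t)"
  proof (rule interval_integral_FTC_nonneg(1)[where F = "\<lambda>x. (1 + x) powr (t + 1) / (t + 1)"
        and A = 0 and B = "2 powr (t + 1) / (t + 1)"])
    fix x assume "ereal (-1) < ereal x" "ereal x < ereal 1"
    then have "1 + x > 0" by simp
    then have "((\<lambda>x. (1 + x) powr (t + 1) / (t + 1)) has_real_derivative
        (t + 1) * (1 + x) powr (t + 1 - 1) / (t + 1)) (at x)"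
      by (auto intro!: derivative_eq_intros)
    then show "((\<lambda>x. (1 + x) powr (t + 1) / (t + 1)) has_real_derivative (1 + x) powr t) (at x)"
      using assms by simp
    show "isCont (\<lambda>x. (1 + x) powr t) x"
      using \<open>1 + x > 0\<close> by (auto intro!: continuous_intros)
  next
    show "(((\<lambda>x. (1 + x) powr (t + 1) / (t + 1)) \<circ> real_of_ereal) \<longlongrightarrow> 0) (at_right (ereal (-1)))"
      unfolding ereal_tendsto_simps1 using assms
      by (auto intro!: tendsto_eq_intros eventually_at_rightI[where b=0])
    show "(((\<lambda>x. (1 + x) powr (t + 1) / (t + 1)) \<circ> real_of_ereal) \<longlongrightarrow> 2 powr (t + 1) / (t + 1))
        (at_left (ereal 1))"
      unfolding ereal_tendsto_simps1 using assms by (auto intro!: tendsto_eq_intros)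
  qed auto
  then show ?thesis by simp
qed

lemma set_integrable_1mx_powr:
  assumes "s > -1"
  shows "set_integrable lborel {-1<..<1::real} (\<lambda>x. (1 - x) powr s)"
proof -
  have "integrable lborel (\<lambda>x. indicator {-1<..<1::real} x *\<^sub>R (1 + x) powr s)"
    using set_integrable_1px_powr[OF assms] by (simp add: set_integrable_def)
  then have "integrable lborel (\<lambda>x. indicator {-1<..<1::real} (0 + (-1) * x) *\<^sub>R (1 + (0 + (-1) * x)) powr s)"
    by (subst lborel_integrable_real_affine_iff) auto
  moreover have "indicator {-1<..<1::real} (- x) = (indicator {-1<..<1} x :: real)" for x
    by (auto simp: indicator_def)
  ultimately show ?thesis by (simp add: set_integrable_def)
qed

lemma powr_le_max_1_2: "1 \<le> y \<Longrightarrow> y \<le> 2 \<Longrightarrow> (y::real) powr t \<le> max 1 (2 powr t)"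
proof (cases "t \<ge> 0")
  case True
  then show "1 \<le> y \<Longrightarrow> y \<le> 2 \<Longrightarrow> ?thesis" using powr_mono2[of t y 2] by simp
next
  case False
  then show "1 \<le> y \<Longrightarrow> y \<le> 2 \<Longrightarrow> ?thesis" using powr_mono2'[of t 1 y] by simp
qed

lemma jacobi_weight_le:
  assumes "-1 < x" "x < 1"
  shows "jacobi_weight s t x \<le> max 1 (2 powr t) * (1 - x) powr s + max 1 (2 powr s) * (1 + x) powr t"
proof (cases "x \<ge> 0")
  case True
  have "(1 + x) powr t \<le> max 1 (2 powr t)" using assms True by (intro powr_le_max_1_2) auto
  then have "jacobi_weight s t x \<le> max 1 (2 powr t) * (1 - x) powr s"
    unfolding jacobi_weight_def by (simp add: mult.commute mult_left_mono)
  then show ?thesis by (simp add: add_increasing2)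
next
  case False
  have "(1 - x) powr s \<le> max 1 (2 powr s)" using assms False by (intro powr_le_max_1_2) auto
  then have "jacobi_weight s t x \<le> max 1 (2 powr s) * (1 + x) powr t"
    unfolding jacobi_weight_def by (simp add: mult_right_mono)
  then show ?thesis by (simp add: add_increasing)
qed

lemma set_integrable_jacobi_weight_mult_bounded:
  assumes "s > -1" "t > -1" and g [measurable]: "g \<in> borel_measurable borel"
    and g_bound: "\<And>x. -1 < x \<Longrightarrow> x < 1 \<Longrightarrow> \<bar>g x\<bar> \<le> B"
  shows "set_integrable lborel {-1<..<1::real} (\<lambda>x. jacobi_weight s t x * g x)"
proof (rule set_integrable_bound)
  define h where "h x = max 1 (2 powr t) * (1 - x) powr s + max 1 (2 powr s) * (1 + x) powr t" for x
  show "set_integrable lborel {-1<..<1::real} (\<lambda>x. B * h x)"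
    unfolding h_def using set_integrable_1px_powr[OF assms(2)] set_integrable_1mx_powr[OF assms(1)]
    by (intro set_integrable_mult_right set_integral_add) auto
  show "set_borel_measurable lborel {-1<..<1} (\<lambda>x. jacobi_weight s t x * g x)"
    unfolding set_borel_measurable_def by measurable
  have "norm (jacobi_weight s t x * g x) \<le> norm (B * h x)" if "x \<in> {-1<..<1}" for x
  proof -
    have "norm (jacobi_weight s t x * g x) = jacobi_weight s t x * \<bar>g x\<bar>"
      by (simp add: abs_mult jacobi_weight_nonneg)
    also have "\<dots> \<le> h x * B"
      using jacobi_weight_le[of x s t] that g_bound[of x]
      by (intro mult_mono) (auto simp: h_def jacobi_weight_nonneg)
    finally show ?thesis by (simp add: mult.commute)
  qed
  then show "AE x in lborel. x \<in> {-1<..<1} \<longrightarrow> norm (jacobi_weight s t x * g x) \<le> norm (B * h x)"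
    by simp
qed

section \<open>Integrals of polynomials against the Jacobi weight\<close>

lemma interval_integral_FTC_Ioo:
  fixes F f :: "real \<Rightarrow> real"
  assumes "a < b"
    and F: "\<And>x. a < x \<Longrightarrow> x < b \<Longrightarrow> (F has_real_derivative f x) (at x)"
    and f: "\<And>x. a < x \<Longrightarrow> x < b \<Longrightarrow> isCont f x"
    and "set_integrable lborel {a<..<b} f"
    and "(F \<longlongrightarrow> A) (at_right a)" "(F \<longlongrightarrow> B) (at_left b)"
  shows "(LBINT x=ereal a..ereal b. f x) = B - A"
proof (rule interval_integral_FTC_integrable)
  fix x assume "ereal a < ereal x" "ereal x < ereal b"
  then show "(F has_vector_derivative f x) (at x)" "isCont f x"
    using F f by (auto simp: has_real_derivative_iff_has_vector_derivative)
qed (use assms in \<open>auto simp: ereal_tendsto_simps1\<close>)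

lemma eps_op_eq_antiderivative:
  fixes F f :: "real \<Rightarrow> real"
  assumes F: "\<And>x. -1 < x \<Longrightarrow> x < 1 \<Longrightarrow> (F has_real_derivative f x) (at x)"
    and f: "\<And>x. -1 < x \<Longrightarrow> x < 1 \<Longrightarrow> isCont f x"
    and f_int: "set_integrable lborel {-1<..<1} f"
    and F_left: "(F \<longlongrightarrow> 0) (at_right (-1))" and F_right: "(F \<longlongrightarrow> 0) (at_left 1)"
    and x: "-1 < x" "x < 1"
  shows "eps_op f x = F x"
proof -
  have "(F \<longlongrightarrow> F x) (at x)"
    using DERIV_isCont[OF F[OF x]] by (simp add: isCont_def)
  then have F_x: "(F \<longlongrightarrow> F x) (at_left x)" "(F \<longlongrightarrow> F x) (at_right x)"
    by (auto intro: tendsto_mono[rotated] simp: at_le)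
  have "(LBINT y=ereal (-1)..ereal x. f y) = F x - 0"
    by (rule interval_integral_FTC_Ioo[OF _ F f set_integrable_subset[OF f_int] F_left F_x(1)])
       (use x in auto)
  moreover have "(LBINT y=ereal x..ereal 1. f y) = 0 - F x"
    by (rule interval_integral_FTC_Ioo[OF _ F f set_integrable_subset[OF f_int] F_x(2) F_right])
       (use x in auto)
  ultimately show ?thesis unfolding eps_op_def by simp
qed

lemma poly_measurable [measurable]: "poly (p :: real poly) \<in> borel_measurable borel"
  by (intro borel_measurable_continuous_onI continuous_on_poly continuous_on_id)

lemma abs_poly_le_sum_abs_coeff:
  fixes p :: "real poly"
  assumes "\<bar>x\<bar> \<le> 1"
  shows "\<bar>poly p x\<bar> \<le> (\<Sum>i\<le>degree p. \<bar>coeff p i\<bar>)"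
proof -
  have "\<bar>poly p x\<bar> \<le> (\<Sum>i\<le>degree p. \<bar>coeff p i * x ^ i\<bar>)"
    unfolding poly_altdef by (rule sum_abs)
  also have "\<dots> \<le> (\<Sum>i\<le>degree p. \<bar>coeff p i\<bar>)"
    using assms by (intro sum_mono) (simp add: abs_mult power_abs power_le_one mult_left_le)
  finally show ?thesis .
qed

lemma set_integrable_jacobi_weight_poly:
  assumes "s > -1" "t > -1"
  shows "set_integrable lborel {-1<..<1::real} (\<lambda>x. jacobi_weight s t x * poly p x)"
  by (rule set_integrable_jacobi_weight_mult_bounded[OF assms, where B = "\<Sum>i\<le>degree p. \<bar>coeff p i\<bar>"])
     (auto intro!: abs_poly_le_sum_abs_coeff)

definition jacobi_integral :: "real \<Rightarrow> real \<Rightarrow> real poly \<Rightarrow> real" where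
  "jacobi_integral s t p = (LINT x:{-1<..<1}|lborel. jacobi_weight s t x * poly p x)"

lemma jacobi_integral_LBINT:
  "jacobi_integral s t p = (LBINT x=ereal (-1)..ereal 1. jacobi_weight s t x * poly p x)"
  unfolding jacobi_integral_def by (simp add: interval_integral_Ioo)

lemma jacobi_integral_cong:
  "(\<And>x. -1 < x \<Longrightarrow> x < 1 \<Longrightarrow> jacobi_weight s t x * poly p x = jacobi_weight s' t' x * poly q x)
    \<Longrightarrow> jacobi_integral s t p = jacobi_integral s' t' q"
  unfolding jacobi_integral_def by (rule set_lebesgue_integral_cong) auto

lemma jacobi_integral_0 [simp]: "jacobi_integral s t 0 = 0"
  unfolding jacobi_integral_def by simp

lemma jacobi_integral_smult [simp]: "jacobi_integral s t (smult c p) = c * jacobi_integral s t p"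
  unfolding jacobi_integral_def by (simp add: mult.left_commute)

lemma jacobi_integral_minus [simp]: "jacobi_integral s t (- p) = - jacobi_integral s t p"
  using jacobi_integral_smult[of s t "-1" p] by simp

context
  fixes s t :: real
  assumes s: "s > -1" and t: "t > -1"
begin

lemma jacobi_integral_add [simp]:
  "jacobi_integral s t (p + q) = jacobi_integral s t p + jacobi_integral s t q"
  unfolding jacobi_integral_def
  using set_integrable_jacobi_weight_poly[OF s t, of p] set_integrable_jacobi_weight_poly[OF s t, of q]
  by (simp add: distrib_left set_integral_add(2))

lemma jacobi_integral_diff [simp]:
  "jacobi_integral s t (p - q) = jacobi_integral s t p - jacobi_integral s t q"
  using jacobi_integral_add[of p "- q"] by simp

lemma jacobi_integral_sum:
  "jacobi_integral s t (\<Sum>i\<in>A. f i) = (\<Sum>i\<in>A. jacobi_integral s t (f i))"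
  by (induction A rule: infinite_finite_induct) auto

end

lemma jacobi_integral_mult_1mx2:
  "jacobi_integral s t ([:1, 0, -1:] * h) = jacobi_integral (s + 1) (t + 1) h"
proof (rule jacobi_integral_cong)
  fix x :: real assume x: "-1 < x" "x < 1"
  have "poly ([:1, 0, -1:] * h) x = (1 - x\<^sup>2) * poly h x"
    by (simp add: power2_eq_square algebra_simps)
  then show "jacobi_weight s t x * poly ([:1, 0, -1:] * h) x = jacobi_weight (s + 1) (t + 1) x * poly h x"
    by (simp flip: jacobi_weight_times_1mx2[OF x])
qed

definition weight_deriv :: "real \<Rightarrow> real \<Rightarrow> real poly \<Rightarrow> real poly" where
  "weight_deriv s t p = [:1, 0, -1:] * pderiv p + [:t - s, - (t + s):] * p"

lemma poly_weight_deriv: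
  "poly (weight_deriv s t p) x = (1 - x\<^sup>2) * poly (pderiv p) x + (t * (1 - x) - s * (1 + x)) * poly p x"
  unfolding weight_deriv_def by (simp add: algebra_simps power2_eq_square)

lemma has_real_derivative_jacobi_weight_poly:
  assumes "-1 < x" "x < 1"
  shows "((\<lambda>x. jacobi_weight s t x * poly p x) has_real_derivative
           jacobi_weight (s - 1) (t - 1) x * poly (weight_deriv s t p) x) (at x)"
  using has_real_derivative_jacobi_weight_mult[OF assms poly_DERIV[of p x], of s t]
  by (simp add: poly_weight_deriv)

lemma weight_deriv_0 [simp]: "weight_deriv s t 0 = 0"
  unfolding weight_deriv_def by simp

lemma weight_deriv_add [simp]: "weight_deriv s t (p + q) = weight_deriv s t p + weight_deriv s t q"
  unfolding weight_deriv_def pderiv_add by (simp only: distrib_left add_ac)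

lemma weight_deriv_smult [simp]: "weight_deriv s t (smult c p) = smult c (weight_deriv s t p)"
  unfolding weight_deriv_def by (simp add: pderiv_smult smult_add_right)

lemma weight_deriv_minus [simp]: "weight_deriv s t (- p) = - weight_deriv s t p"
  using weight_deriv_smult[of s t "-1" p] by simp

lemma weight_deriv_sum: "weight_deriv s t (\<Sum>i\<in>A. f i) = (\<Sum>i\<in>A. weight_deriv s t (f i))"
  by (induction A rule: infinite_finite_induct) auto

lemma weight_deriv_mult:
  "weight_deriv (s + s') (t + t') (f * g) = weight_deriv s t f * g + f * weight_deriv s' t' g"
proof -
  have "[:t + t' - (s + s'), - (t + t' + (s + s')):] = [:t - s, - (t + s):] + [:t' - s', - (t' + s'):]"
    by simp
  then show ?thesis
    unfolding weight_deriv_def pderiv_mult by (simp only: distrib_left distrib_right mult_ac add_ac)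
qed

lemma weight_deriv_0_0: "weight_deriv 0 0 p = [:1, 0, -1:] * pderiv p"
  unfolding weight_deriv_def by simp

lemma coeff_weight_deriv_Suc:
  "coeff (weight_deriv s t p) (Suc k) = real (Suc (Suc k)) * coeff p (Suc (Suc k)) - real k * coeff p k
      + (t - s) * coeff p (Suc k) - (t + s) * coeff p k"
  unfolding weight_deriv_def by (cases k) (simp_all add: coeff_pderiv algebra_simps)

lemma degree_weight_deriv: "degree p \<le> d \<Longrightarrow> degree (weight_deriv s t p) \<le> Suc d"
  by (intro degree_le allI impI, rename_tac i, case_tac i)
     (auto simp: coeff_weight_deriv_Suc coeff_eq_0)

lemma coeff_weight_deriv_top:
  "degree p \<le> d \<Longrightarrow> coeff (weight_deriv s t p) (Suc d) = - (real d + s + t) * coeff p d"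
  by (simp add: coeff_weight_deriv_Suc coeff_eq_0 algebra_simps)

lemma jacobi_integral_weight_deriv:
  assumes "s > 0" "t > 0"
  shows "jacobi_integral (s - 1) (t - 1) (weight_deriv s t p) = 0"
proof -
  have "(LBINT x=ereal (-1)..ereal 1. jacobi_weight (s - 1) (t - 1) x * poly (weight_deriv s t p) x) = 0 - 0"
  proof (rule interval_integral_FTC_Ioo[where F = "\<lambda>x. jacobi_weight s t x * poly p x"])
    show "set_integrable lborel {-1<..<1} (\<lambda>x. jacobi_weight (s - 1) (t - 1) x * poly (weight_deriv s t p) x)"
      using assms by (intro set_integrable_jacobi_weight_poly) auto
    show "((\<lambda>x. jacobi_weight s t x * poly p x) \<longlongrightarrow> 0) (at_right (-1))"
      using assms by (intro jacobi_weight_mult_tendsto_left_end[where L = "poly p (-1)"])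
        (auto intro!: tendsto_eq_intros)
    show "((\<lambda>x. jacobi_weight s t x * poly p x) \<longlongrightarrow> 0) (at_left 1)"
      using assms by (intro jacobi_weight_mult_tendsto_right_end[where L = "poly p 1"])
        (auto intro!: tendsto_eq_intros)
    show "isCont (\<lambda>x. jacobi_weight (s - 1) (t - 1) x * poly (weight_deriv s t p) x) x"
      if "-1 < x" "x < 1" for x
      using that unfolding jacobi_weight_def by (auto intro!: continuous_intros)
  qed (auto intro!: has_real_derivative_jacobi_weight_poly)
  then show ?thesis by (simp add: jacobi_integral_LBINT)
qed

lemma jacobi_integral_skew:
  assumes "s > 0" "t > 0"
  shows "jacobi_integral (s - 1) (t - 1) (f * weight_deriv (s/2) (t/2) g)
       = - jacobi_integral (s - 1) (t - 1) (weight_deriv (s/2) (t/2) f * g)"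
proof -
  have "weight_deriv s t (f * g) = weight_deriv (s/2) (t/2) f * g + f * weight_deriv (s/2) (t/2) g"
    using weight_deriv_mult[of "s/2" "s/2" "t/2" "t/2" f g] by simp
  then show ?thesis
    using jacobi_integral_weight_deriv[OF assms, of "f * g"] assms by simp
qed

lemma jacobi_integral_1_pos:
  assumes "s > -1" "t > -1"
  shows "jacobi_integral s t 1 > 0"
proof -
  define f where "f = (\<lambda>x. indicator {-1<..<1::real} x * jacobi_weight s t x)"
  have f_int: "integrable lborel f"
    using set_integrable_jacobi_weight_poly[OF assms, of 1] by (simp add: f_def set_integrable_def)
  have f_integral: "(LINT x:{-1<..<1}|lborel. f x) = jacobi_integral s t 1"
    unfolding jacobi_integral_def f_def by (rule set_lebesgue_integral_cong) auto
  have "jacobi_integral s t 1 \<ge> 0"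
    unfolding jacobi_integral_def set_lebesgue_integral_def
    by (rule Bochner_Integration.integral_nonneg) (simp add: jacobi_weight_nonneg)
  moreover have "jacobi_integral s t 1 \<noteq> 0"
  proof
    assume "jacobi_integral s t 1 = 0"
    then have "{-1<..<1::real} \<in> null_sets lborel"
      using f_integral
      by (intro null_if_pos_func_has_zero_int[OF f_int]) (auto simp: f_def jacobi_weight_def)
    then show False by (auto simp: null_sets_def)
  qed
  ultimately show ?thesis by simp
qed

lemma jacobi_integral_1_shift:
  assumes "s > -1" "t > -1"
  shows "jacobi_integral (s + 1) t 1 = 2 * (s + 1) / (s + t + 2) * jacobi_integral s t 1"
    and "jacobi_integral s (t + 1) 1 = 2 * (t + 1) / (s + t + 2) * jacobi_integral s t 1"
proof -
  let ?J = "jacobi_integral s t"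
  have "weight_deriv (s + 1) (t + 1) 1 = smult (t - s) 1 - smult (s + t + 2) [:0, 1:]"
    unfolding weight_deriv_def by (simp add: algebra_simps)
  moreover have "?J (weight_deriv (s + 1) (t + 1) 1) = 0"
    using jacobi_integral_weight_deriv[of "s + 1" "t + 1" 1] assms by simp
  ultimately have "?J (smult (t - s) 1) - ?J (smult (s + t + 2) [:0, 1:]) = 0"
    using assms by (metis jacobi_integral_diff)
  then have x_moment: "(s + t + 2) * ?J [:0, 1:] = (t - s) * ?J 1"
    by (simp only: jacobi_integral_smult)
  have "jacobi_integral (s + 1) t 1 = ?J (1 - [:0, 1:])"
    using jacobi_weight_times_1mx[of _ s t] by (intro jacobi_integral_cong) (simp add: algebra_simps)
  then have shift_s: "jacobi_integral (s + 1) t 1 = ?J 1 - ?J [:0, 1:]"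
    using assms by simp
  have "(s + t + 2) * jacobi_integral (s + 1) t 1 = 2 * (s + 1) * ?J 1"
    unfolding shift_s right_diff_distrib x_moment by (simp add: algebra_simps)
  then show "jacobi_integral (s + 1) t 1 = 2 * (s + 1) / (s + t + 2) * ?J 1"
    using assms by (simp add: field_simps)
  have "jacobi_integral s (t + 1) 1 = ?J (1 + [:0, 1:])"
    using jacobi_weight_times_1px[of _ s t] by (intro jacobi_integral_cong) (simp add: algebra_simps)
  then have shift_t: "jacobi_integral s (t + 1) 1 = ?J 1 + ?J [:0, 1:]"
    using assms by simp
  have "(s + t + 2) * jacobi_integral s (t + 1) 1 = 2 * (t + 1) * ?J 1"
    unfolding shift_t distrib_left x_moment by (simp add: algebra_simps)
  then show "jacobi_integral s (t + 1) 1 = 2 * (t + 1) / (s + t + 2) * ?J 1"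
    using assms by (simp add: field_simps)
qed

lemma jacobi_integral_1_shift_both:
  assumes "s > -1" "t > -1"
  shows "jacobi_integral (s + 1) (t + 1) 1
       = 4 * (s + 1) * (t + 1) / ((s + t + 2) * (s + t + 3)) * jacobi_integral s t 1"
proof -
  have "jacobi_integral (s + 1) (t + 1) 1 = 2 * (t + 1) / (s + t + 3) * jacobi_integral (s + 1) t 1"
    using jacobi_integral_1_shift(2)[of "s + 1" t] assms by (simp add: add_ac)
  also have "\<dots> = 2 * (t + 1) / (s + t + 3) * (2 * (s + 1) / (s + t + 2) * jacobi_integral s t 1)"
    using jacobi_integral_1_shift(1)[OF assms] by simp
  finally show ?thesis
    using assms by (simp add: field_simps)
qed

section \<open>Jacobi polynomials\<close>

definition half_x_minus_1 :: "real poly" where "half_x_minus_1 = [:-1/2, 1/2:]"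
definition half_x_plus_1 :: "real poly" where "half_x_plus_1 = [:1/2, 1/2:]"

definition jacobi_poly :: "nat \<Rightarrow> real \<Rightarrow> real \<Rightarrow> real poly" where
  "jacobi_poly n al be = (\<Sum>s\<le>n. smult (((real n + al) gchoose (n - s)) * ((real n + be) gchoose s))
                                       (half_x_minus_1 ^ s * half_x_plus_1 ^ (n - s)))"

lemma poly_jacobi_poly: "poly (jacobi_poly n al be) x = jacobiP n al be x"
  unfolding jacobi_poly_def jacobiP_def half_x_minus_1_def half_x_plus_1_def
  by (simp add: poly_sum field_simps)

lemma jacobi_poly_0 [simp]: "jacobi_poly 0 al be = 1"
  unfolding jacobi_poly_def by simp

lemma pderiv_power_mult_self:
  fixes p :: "'a::{comm_semiring_1,semiring_no_zero_divisors} poly"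
  assumes "pderiv p = [:c:]"
  shows "pderiv (p ^ k) * p = smult (of_nat k * c) (p ^ k)"
proof (cases k)
  case (Suc n)
  have "pderiv (p ^ Suc n) * p = smult (of_nat (Suc n)) (p ^ n) * [:c:] * p"
    using assms by (simp only: pderiv_power_Suc)
  also have "\<dots> = smult (of_nat (Suc n) * c) (p ^ Suc n)"
    by (simp add: power_Suc2 mult_ac)
  finally show ?thesis using Suc by simp
qed simp

lemma weight_deriv_half_powers:
  "weight_deriv s t (half_x_minus_1 ^ k * half_x_plus_1 ^ j)
     = smult (-2 * (real k + s)) (half_x_minus_1 ^ k * half_x_plus_1 ^ Suc j)
       + smult (-2 * (real j + t)) (half_x_minus_1 ^ Suc k * half_x_plus_1 ^ j)"
proof -
  let ?U = half_x_minus_1 and ?V = half_x_plus_1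
  have "pderiv ?U = [:1/2:]" "pderiv ?V = [:1/2:]"
    by (simp_all add: half_x_minus_1_def half_x_plus_1_def pderiv_pCons)
  then have dU: "pderiv (?U ^ k) * ?U = smult (real k / 2) (?U ^ k)"
    and dV: "pderiv (?V ^ j) * ?V = smult (real j / 2) (?V ^ j)"
    using pderiv_power_mult_self[of ?U "1/2" k] pderiv_power_mult_self[of ?V "1/2" j] by simp_all
  have "[:1, 0, -1:] = smult (-4) (?U * ?V)"
    by (simp add: half_x_minus_1_def half_x_plus_1_def)
  then have "[:1, 0, -1:] * pderiv (?U ^ k * ?V ^ j)
      = smult (-4) (?U ^ k * ?U) * (pderiv (?V ^ j) * ?V) + smult (-4) (?V ^ j * ?V) * (pderiv (?U ^ k) * ?U)"
    unfolding pderiv_mult by (simp only: mult_smult_left mult_smult_right distrib_left mult_ac)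
  also have "\<dots> = smult (- 2 * real j) (?U ^ Suc k * ?V ^ j) + smult (- 2 * real k) (?U ^ k * ?V ^ Suc j)"
    unfolding dU dV by (simp add: power_Suc2 mult_ac)
  finally have D: "[:1, 0, -1:] * pderiv (?U ^ k * ?V ^ j) = \<dots>" .
  have lin: "[:t - s, - (t + s):] = smult (-2 * t) ?U + smult (-2 * s) ?V"
    by (simp add: half_x_minus_1_def half_x_plus_1_def)
  show ?thesis
    unfolding weight_deriv_def D lin by (simp add: algebra_simps smult_add_left smult_diff_left power_Suc2)
qed

lemma gbinomial_mult_diff: "((a::real) - of_nat k) * (a gchoose k) = of_nat (Suc k) * (a gchoose Suc k)"
  using gbinomial_absorption[of k a] by (simp add: gbinomial_absorb_comp)

lemma smult_sum_right: "smult c (\<Sum>i\<in>A. f i) = (\<Sum>i\<in>A. smult c (f i))"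
  by (induction A rule: infinite_finite_induct) (auto simp: smult_add_right)

lemma gbinomial_raising_coeffs:
  assumes "k \<le> m"
  shows "(real k + (al + 1)) * ((real (Suc m) + al) gchoose (m - k))
           = real (Suc m - k) * ((real (Suc m) + al) gchoose (Suc m - k))"
    and "(real (m - k) + (be + 1)) * ((real (Suc m) + be) gchoose k)
           = real (Suc k) * ((real (Suc m) + be) gchoose Suc k)"
proof -
  have e: "real (Suc m) + al - of_nat (m - k) = real k + (al + 1)" "Suc (m - k) = Suc m - k"
    "real (Suc m) + be - of_nat k = real (m - k) + (be + 1)"
    using assms by (simp_all add: of_nat_diff Suc_diff_le)
  show "(real k + (al + 1)) * ((real (Suc m) + al) gchoose (m - k))
      = real (Suc m - k) * ((real (Suc m) + al) gchoose (Suc m - k))"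
    using gbinomial_mult_diff[of "real (Suc m) + al" "m - k", unfolded e(1,2)] .
  show "(real (m - k) + (be + 1)) * ((real (Suc m) + be) gchoose k)
      = real (Suc k) * ((real (Suc m) + be) gchoose Suc k)"
    using gbinomial_mult_diff[of "real (Suc m) + be" k, unfolded e(3)] .
qed

lemma jacobi_poly_raising:
  "weight_deriv (al + 1) (be + 1) (jacobi_poly m (al + 1) (be + 1))
     = smult (-2 * real (Suc m)) (jacobi_poly (Suc m) al be)"
proof -
  define n where "n = Suc m"
  let ?U = half_x_minus_1 and ?V = half_x_plus_1
  define T where "T k = ?U ^ k * ?V ^ (n - k)" for k
  define p where "p k = ((real n + al) gchoose (n - k)) * ((real n + be) gchoose k)" for k
  define q where "q k = ((real n + al) gchoose (m - k)) * ((real n + be) gchoose k)" for k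
  have JP_m: "jacobi_poly m (al + 1) (be + 1) = (\<Sum>k\<le>m. smult (q k) (?U ^ k * ?V ^ (m - k)))"
    unfolding jacobi_poly_def q_def n_def by (simp add: add_ac)
  have "weight_deriv (al + 1) (be + 1) (smult (q k) (?U ^ k * ?V ^ (m - k)))
      = smult (-2) (smult ((real k + (al + 1)) * q k) (T k)
                    + smult ((real (m - k) + (be + 1)) * q k) (T (Suc k)))" if "k \<le> m" for k
    using that by (simp add: weight_deriv_half_powers T_def n_def Suc_diff_le smult_add_right mult_ac)
  then have "weight_deriv (al + 1) (be + 1) (jacobi_poly m (al + 1) (be + 1))
      = smult (-2) ((\<Sum>k\<le>m. smult ((real k + (al + 1)) * q k) (T k))
                    + (\<Sum>k\<le>m. smult ((real (m - k) + (be + 1)) * q k) (T (Suc k))))"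
    unfolding JP_m weight_deriv_sum smult_sum_right sum.distrib[symmetric] by (intro sum.cong) auto
  also have "(\<Sum>k\<le>m. smult ((real k + (al + 1)) * q k) (T k)) = (\<Sum>k\<le>n. smult (real (n - k) * p k) (T k))"
  proof -
    have "(real k + (al + 1)) * q k = real (n - k) * p k" if "k \<le> m" for k
      using gbinomial_raising_coeffs(1)[OF that, of al] unfolding p_def q_def n_def
      by (simp only: mult.assoc[symmetric])
    then show ?thesis
      unfolding n_def sum.atMost_Suc by (simp add: n_def)
  qed
  also have "(\<Sum>k\<le>m. smult ((real (m - k) + (be + 1)) * q k) (T (Suc k))) = (\<Sum>k\<le>n. smult (real k * p k) (T k))"
  proof -
    have "(real (m - k) + (be + 1)) * q k = real (Suc k) * p (Suc k)" if "k \<le> m" for k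
      using gbinomial_raising_coeffs(2)[OF that, of be] unfolding p_def q_def n_def
      by (simp only: mult.left_commute[of _ "(real (Suc m) + al) gchoose _"] diff_Suc_Suc)
    then show ?thesis
      unfolding n_def sum.atMost_Suc_shift by simp
  qed
  also have "(\<Sum>k\<le>n. smult (real (n - k) * p k) (T k)) + (\<Sum>k\<le>n. smult (real k * p k) (T k))
      = smult (real n) (jacobi_poly n al be)"
    unfolding jacobi_poly_def smult_sum_right sum.distrib[symmetric] smult_add_left[symmetric]
    by (intro sum.cong) (auto simp: T_def p_def of_nat_diff algebra_simps)
  finally show ?thesis
    by (simp add: n_def)
qed

lemma degree_half_powers: "degree (half_x_minus_1 ^ k * half_x_plus_1 ^ j) = k + j"
  by (simp add: degree_mult_eq degree_power_eq half_x_minus_1_def half_x_plus_1_def)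

lemma coeff_half_powers: "coeff (half_x_minus_1 ^ k * half_x_plus_1 ^ j) (k + j) = (1/2) ^ (k + j)"
proof -
  have "coeff (half_x_minus_1 ^ k * half_x_plus_1 ^ j) (k + j) = lead_coeff (half_x_minus_1 ^ k * half_x_plus_1 ^ j)"
    by (simp add: degree_half_powers)
  then show ?thesis
    by (simp add: lead_coeff_mult lead_coeff_power power_add half_x_minus_1_def half_x_plus_1_def)
qed

lemma degree_jacobi_poly: "degree (jacobi_poly n al be) \<le> n"
  unfolding jacobi_poly_def
  by (intro degree_sum_le) (auto intro!: order.trans[OF degree_smult_le] simp: degree_half_powers)

lemma coeff_jacobi_poly_top: "coeff (jacobi_poly n al be) n = (1/2) ^ n * ((2 * real n + al + be) gchoose n)"
proof -
  have "coeff (jacobi_poly n al be) n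
      = (1/2) ^ n * (\<Sum>s\<le>n. ((real n + be) gchoose s) * ((real n + al) gchoose (n - s)))"
    unfolding jacobi_poly_def coeff_sum coeff_smult sum_distrib_left
  proof (intro sum.cong)
    fix s assume "s \<in> {..n}"
    then have "coeff (half_x_minus_1 ^ s * half_x_plus_1 ^ (n - s)) n = (1/2) ^ n"
      using coeff_half_powers[of s "n - s"] by simp
    then show "((real n + al) gchoose (n - s)) * ((real n + be) gchoose s)
        * coeff (half_x_minus_1 ^ s * half_x_plus_1 ^ (n - s)) n
      = (1/2) ^ n * (((real n + be) gchoose s) * ((real n + al) gchoose (n - s)))"
      by simp
  qed simp
  also have "\<dots> = (1/2) ^ n * ((2 * real n + al + be) gchoose n)"
    using gbinomial_Vandermonde[of "real n + be" "real n + al" n]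
    by (simp add: atLeast0AtMost algebra_simps)
  finally show ?thesis .
qed

lemma jacobi_integral_jacobi_poly_Suc_monom:
  assumes "al > -1" "be > -1"
  shows "2 * real (Suc m) * jacobi_integral al be (jacobi_poly (Suc m) al be * monom 1 j)
       = real j * jacobi_integral (al + 1) (be + 1) (jacobi_poly m (al + 1) (be + 1) * monom 1 (j - 1))"
proof -
  let ?Q = "jacobi_poly m (al + 1) (be + 1)"
  have "pderiv (monom 1 j) = smult (real j) (monom (1::real) (j - 1))"
    by (simp add: pderiv_monom smult_monom)
  then have D: "weight_deriv (al + 1) (be + 1) (?Q * monom 1 j)
      = smult (-2 * real (Suc m)) (jacobi_poly (Suc m) al be * monom 1 j)
        + smult (real j) ([:1, 0, -1:] * (?Q * monom 1 (j - 1)))"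
    using weight_deriv_mult[of "al + 1" 0 "be + 1" 0 ?Q "monom 1 j"]
    by (simp only: jacobi_poly_raising weight_deriv_0_0 mult_smult_left mult_smult_right add_0_right mult_ac)
  have "0 = jacobi_integral al be (weight_deriv (al + 1) (be + 1) (?Q * monom 1 j))"
    using jacobi_integral_weight_deriv[of "al + 1" "be + 1"] assms by simp
  also have "\<dots> = -2 * real (Suc m) * jacobi_integral al be (jacobi_poly (Suc m) al be * monom 1 j)
      + real j * jacobi_integral (al + 1) (be + 1) (?Q * monom 1 (j - 1))"
    unfolding D jacobi_integral_add[OF assms] jacobi_integral_smult jacobi_integral_mult_1mx2 ..
  finally show ?thesis by (simp add: algebra_simps)
qed

definition jacobi_moment :: "real \<Rightarrow> real \<Rightarrow> nat \<Rightarrow> real" where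
  "jacobi_moment al be n = jacobi_integral (al + real n) (be + real n) 1 / 2 ^ n"

lemma jacobi_integral_jacobi_poly_monom:
  assumes "al > -1" "be > -1" "j \<le> n"
  shows "jacobi_integral al be (jacobi_poly n al be * monom 1 j) = (if j = n then jacobi_moment al be n else 0)"
  using assms
proof (induction n arbitrary: al be j)
  case 0
  then show ?case by (simp add: jacobi_moment_def)
next
  case (Suc m)
  show ?case
  proof (cases j)
    case (Suc i)
    define X where "X = jacobi_integral al be (jacobi_poly (Suc m) al be * monom 1 j)"
    define Y where "Y = jacobi_integral (al + 1) (be + 1) (jacobi_poly m (al + 1) (be + 1) * monom 1 i)"
    have Y: "Y = (if i = m then 2 * jacobi_moment al be (Suc m) else 0)"
      unfolding Y_def using Suc.prems Suc by (subst Suc.IH) (auto simp: jacobi_moment_def add_ac)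
    have "2 * real (Suc m) * X = real j * Y"
      unfolding X_def Y_def using jacobi_integral_jacobi_poly_Suc_monom[of al be m j] Suc.prems Suc by simp
    then have "X = real j * Y / (2 * real (Suc m))"
      by (simp add: field_simps)
    also have "\<dots> = (if j = Suc m then jacobi_moment al be (Suc m) else 0)"
      unfolding Y using Suc by (simp add: field_simps)
    finally show ?thesis
      unfolding X_def .
  qed (use jacobi_integral_jacobi_poly_Suc_monom[of al be m 0] Suc.prems in simp)
qed

lemma jacobi_h_eq: "jacobi_h n al be = jacobi_integral al be (jacobi_poly n al be * jacobi_poly n al be)"
  unfolding jacobi_h_def jacobi_integral_LBINT
  by (simp add: jacobi_weight_def poly_jacobi_poly power2_eq_square mult_ac)

context
  fixes al be :: real
  assumes al: "al > -1" and be: "be > -1"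
begin

lemma jacobi_moment_pos: "jacobi_moment al be n > 0"
  unfolding jacobi_moment_def using jacobi_integral_1_pos[of "al + real n" "be + real n"] al be by simp

lemma jacobi_integral_jacobi_poly_mult:
  assumes "degree q \<le> n"
  shows "jacobi_integral al be (jacobi_poly n al be * q) = coeff q n * jacobi_moment al be n"
proof -
  have "jacobi_poly n al be * q = (\<Sum>i\<le>degree q. smult (coeff q i) (jacobi_poly n al be * monom 1 i))"
    by (subst poly_as_sum_of_monoms[symmetric])
       (simp add: sum_distrib_left smult_monom flip: mult_smult_right)
  then have "jacobi_integral al be (jacobi_poly n al be * q)
      = (\<Sum>i\<le>degree q. coeff q i * jacobi_integral al be (jacobi_poly n al be * monom 1 i))"
    using al be by (simp add: jacobi_integral_sum)
  also have "\<dots> = (\<Sum>i\<le>degree q. if i = n then coeff q n * jacobi_moment al be n else 0)"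
    using assms al be by (intro sum.cong) (auto simp: jacobi_integral_jacobi_poly_monom)
  also have "\<dots> = coeff q n * jacobi_moment al be n"
    using assms by (auto simp: coeff_eq_0)
  finally show ?thesis .
qed

lemma jacobi_integral_jacobi_poly_orth:
  assumes "m \<noteq> n"
  shows "jacobi_integral al be (jacobi_poly m al be * jacobi_poly n al be) = 0"
proof -
  have lower: "jacobi_integral al be (jacobi_poly n al be * jacobi_poly m al be) = 0" if "m < n" for m n
    using that degree_jacobi_poly[of m al be]
    by (subst jacobi_integral_jacobi_poly_mult) (auto simp: coeff_eq_0)
  then show ?thesis
    using assms lower[of m n] lower[of n m] by (cases "m < n") (simp_all add: mult.commute)
qed

lemma coeff_jacobi_poly_top_pos: "coeff (jacobi_poly n al be) n > 0"
proof (cases n)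
  case (Suc m)
  have "pochhammer (2 * real n + al + be - of_nat n + 1) n > 0"
    using al be Suc by (intro pochhammer_pos) simp
  then show ?thesis
    by (simp add: coeff_jacobi_poly_top gbinomial_pochhammer')
qed (simp add: coeff_jacobi_poly_top)

lemma jacobi_h_eq_coeff_moment: "jacobi_h n al be = coeff (jacobi_poly n al be) n * jacobi_moment al be n"
  unfolding jacobi_h_eq by (rule jacobi_integral_jacobi_poly_mult[OF degree_jacobi_poly])

lemma jacobi_h_pos: "jacobi_h n al be > 0"
  unfolding jacobi_h_eq_coeff_moment using coeff_jacobi_poly_top_pos jacobi_moment_pos by simp

lemma jacobi_moment_Suc:
  "jacobi_moment al be (Suc n) = jacobi_moment al be n
     * (2 * (al + real n + 1) * (be + real n + 1) / ((al + be + 2 * real n + 2) * (al + be + 2 * real n + 3)))"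
proof -
  define R where "R = (al + real n + 1) * (be + real n + 1) / ((al + be + 2 * real n + 2) * (al + be + 2 * real n + 3))"
  have "jacobi_integral (al + real (Suc n)) (be + real (Suc n)) 1 = 4 * R * jacobi_integral (al + real n) (be + real n) 1"
    using jacobi_integral_1_shift_both[of "al + real n" "be + real n"] al be by (simp add: R_def algebra_simps)
  then have "jacobi_moment al be (Suc n) = jacobi_moment al be n * (2 * R)"
    unfolding jacobi_moment_def by simp
  then show ?thesis
    by (simp add: R_def)
qed

lemma coeff_jacobi_poly_top_Suc:
  assumes "n \<ge> 1"
  shows "coeff (jacobi_poly (Suc n) al be) (Suc n) = coeff (jacobi_poly n al be) n
     * ((2 * real n + al + be + 1) * (2 * real n + al + be + 2) / (2 * (real n + 1) * (real n + al + be + 1)))"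
proof -
  define z where "z = real n + al + be + 1"
  have z: "z > 0" using assms al be by (simp add: z_def)
  have "z * pochhammer (z + 1) (Suc n) = pochhammer z (Suc (Suc n))"
    by (simp add: pochhammer_rec)
  also have "\<dots> = pochhammer z n * (z + n) * (z + n + 1)"
    by (simp add: pochhammer_Suc algebra_simps)
  finally have p: "pochhammer (z + 1) (Suc n) = pochhammer z n * (z + n) * (z + n + 1) / z"
    using z by (simp add: field_simps)
  have c: "coeff (jacobi_poly n al be) n = (1/2) ^ n * (pochhammer z n / fact n)"
    "coeff (jacobi_poly (Suc n) al be) (Suc n) = (1/2) ^ Suc n * (pochhammer (z + 1) (Suc n) / fact (Suc n))"
    unfolding coeff_jacobi_poly_top gbinomial_pochhammer' z_def by (simp_all add: algebra_simps)
  show ?thesis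
    unfolding c p using z by (simp add: z_def field_simps)
qed

end

section \<open>The skew-symmetric operator in the orthonormal basis\<close>

definition phi_poly :: "real \<Rightarrow> real \<Rightarrow> nat \<Rightarrow> real poly" where
  "phi_poly a b k = smult (1 / sqrt (jacobi_h k (a - 1) (b - 1))) (jacobi_poly k (a - 1) (b - 1))"

definition skew_coeff :: "real \<Rightarrow> real \<Rightarrow> nat \<Rightarrow> real" where
  "skew_coeff a b n
     = jacobi_integral (a - 1) (b - 1) (phi_poly a b (Suc n) * weight_deriv (a/2) (b/2) (phi_poly a b n))"

context
  fixes a b :: real
  assumes a: "a > 0" and b: "b > 0"
begin

private lemma a_minus_1: "a - 1 > -1" and b_minus_1: "b - 1 > -1"
  using a b by auto

lemma phi_poly_orthonormal:
  "jacobi_integral (a - 1) (b - 1) (phi_poly a b j * phi_poly a b k) = (if j = k then 1 else 0)"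
  using jacobi_integral_jacobi_poly_orth[OF a_minus_1 b_minus_1, of j k] jacobi_h_pos[OF a_minus_1 b_minus_1, of k]
  by (auto simp: phi_poly_def jacobi_h_eq[symmetric] real_sqrt_mult[symmetric])

lemma degree_phi_poly: "degree (phi_poly a b k) \<le> k"
  unfolding phi_poly_def using degree_jacobi_poly by (metis degree_smult_le order.trans)

lemma coeff_phi_poly_top_nonzero: "coeff (phi_poly a b k) k \<noteq> 0"
  using coeff_jacobi_poly_top_pos[OF a_minus_1 b_minus_1, of k] jacobi_h_pos[OF a_minus_1 b_minus_1, of k]
  by (simp add: phi_poly_def)

lemma jacobi_integral_phi_poly_low_degree:
  assumes "degree r < n"
  shows "jacobi_integral (a - 1) (b - 1) (phi_poly a b n * r) = 0"
  using jacobi_integral_jacobi_poly_mult[OF a_minus_1 b_minus_1, of r n] assms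
  by (simp add: phi_poly_def coeff_eq_0)

lemma phi_poly_expansion:
  assumes "\<And>i. i \<ge> m \<Longrightarrow> coeff q i = 0"
  shows "q = (\<Sum>k<m. smult (jacobi_integral (a - 1) (b - 1) (phi_poly a b k * q)) (phi_poly a b k))"
  using assms
proof (induction m arbitrary: q)
  case 0
  then show ?case by (simp add: poly_eq_iff)
next
  case (Suc m)
  let ?p = "phi_poly a b" and ?I = "jacobi_integral (a - 1) (b - 1)"
  define c where "c = coeff q m / coeff (?p m) m"
  define q' where "q' = q - smult c (?p m)"
  have "coeff q' i = 0" if "i \<ge> m" for i
    using that Suc.prems coeff_phi_poly_top_nonzero[of m] degree_phi_poly[of m]
    by (cases "i = m") (auto simp: q'_def c_def coeff_eq_0)
  then have q': "q' = (\<Sum>k<m. smult (?I (?p k * q')) (?p k))"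
    by (rule Suc.IH)
  have shift: "?I (?p k * q') = ?I (?p k * q) - c * (if k = m then 1 else 0)" for k
    using a_minus_1 b_minus_1 by (simp add: q'_def right_diff_distrib phi_poly_orthonormal)
  have "?I (?p m * q') = 0"
    by (subst q') (simp add: sum_distrib_left jacobi_integral_sum a_minus_1 b_minus_1 phi_poly_orthonormal)
  then have c: "c = ?I (?p m * q)"
    using shift[of m] by simp
  have "q = q' + smult c (?p m)"
    by (simp add: q'_def)
  also have "\<dots> = (\<Sum>k<Suc m. smult (?I (?p k * q)) (?p k))"
    using q' shift c by simp
  finally show ?case .
qed

lemma jacobi_integral_phi_poly_weight_deriv:
  "jacobi_integral (a - 1) (b - 1) (phi_poly a b k * weight_deriv (a/2) (b/2) (phi_poly a b n))
     = (if k = Suc n then skew_coeff a b n else if Suc k = n then - skew_coeff a b k else 0)"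
proof -
  let ?p = "phi_poly a b" and ?I = "jacobi_integral (a - 1) (b - 1)" and ?D = "weight_deriv (a/2) (b/2)"
  have skew: "?I (?p k * ?D (?p n)) = - ?I (?p n * ?D (?p k))"
    using jacobi_integral_skew[OF a b, of "?p k" "?p n"] by (simp add: mult.commute)
  consider "k = Suc n" | "k = n" | "Suc k = n" | "Suc k < n" | "Suc n < k"
    by linarith
  then show ?thesis
  proof cases
    case 3
    then show ?thesis using skew by (simp add: skew_coeff_def)
  next
    case 4
    then have "degree (?D (?p k)) < n"
      using degree_weight_deriv[OF degree_phi_poly] le_less_trans by blast
    then show ?thesis
      using 4 skew jacobi_integral_phi_poly_low_degree by simp
  next
    case 5
    then have "degree (?D (?p n)) < k"
      using degree_weight_deriv[OF degree_phi_poly] le_less_trans by blast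
    then show ?thesis
      using 5 jacobi_integral_phi_poly_low_degree by simp
  qed (use skew in \<open>simp_all add: skew_coeff_def\<close>)
qed

lemma weight_deriv_phi_poly:
  "weight_deriv (a/2) (b/2) (phi_poly a b n)
     = smult (skew_coeff a b n) (phi_poly a b (Suc n))
       - (if n = 0 then 0 else smult (skew_coeff a b (n - 1)) (phi_poly a b (n - 1)))"
proof -
  have "coeff (weight_deriv (a/2) (b/2) (phi_poly a b n)) i = 0" if "i \<ge> Suc (Suc n)" for i
    using that degree_weight_deriv[OF degree_phi_poly, of "a/2" "b/2" n] by (simp add: coeff_eq_0)
  then have "weight_deriv (a/2) (b/2) (phi_poly a b n) = (\<Sum>k<Suc (Suc n).
      smult (jacobi_integral (a - 1) (b - 1) (phi_poly a b k * weight_deriv (a/2) (b/2) (phi_poly a b n)))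
            (phi_poly a b k))"
    by (rule phi_poly_expansion)
  also have "\<dots> = (\<Sum>k<Suc (Suc n).
      smult (if k = Suc n then skew_coeff a b n else if Suc k = n then - skew_coeff a b k else 0) (phi_poly a b k))"
    by (simp only: jacobi_integral_phi_poly_weight_deriv)
  also have "\<dots> = smult (skew_coeff a b n) (phi_poly a b (Suc n))
       - (if n = 0 then 0 else smult (skew_coeff a b (n - 1)) (phi_poly a b (n - 1)))"
    by (cases n) (simp_all add: if_distrib[of "\<lambda>c. smult c _"] sum.delta' cong: if_cong)
  finally show ?thesis .
qed

lemma skew_coeff_eq:
  "skew_coeff a b n = - (real n + a/2 + b/2) * coeff (jacobi_poly n (a - 1) (b - 1)) n
      * jacobi_moment (a - 1) (b - 1) (Suc n)
      / (sqrt (jacobi_h (Suc n) (a - 1) (b - 1)) * sqrt (jacobi_h n (a - 1) (b - 1)))"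
proof -
  let ?P = "\<lambda>k. jacobi_poly k (a - 1) (b - 1)"
  have "degree (weight_deriv (a/2) (b/2) (?P n)) \<le> Suc n"
    by (rule degree_weight_deriv[OF degree_jacobi_poly])
  then have "jacobi_integral (a - 1) (b - 1) (?P (Suc n) * weight_deriv (a/2) (b/2) (?P n))
      = - (real n + a/2 + b/2) * coeff (?P n) n * jacobi_moment (a - 1) (b - 1) (Suc n)"
    by (simp add: jacobi_integral_jacobi_poly_mult[OF a_minus_1 b_minus_1]
        coeff_weight_deriv_top[OF degree_jacobi_poly] algebra_simps)
  then show ?thesis
    by (simp add: skew_coeff_def phi_poly_def)
qed

lemma skew_coeff_neg: "skew_coeff a b n < 0"
proof -
  have "0 < (real n + a/2 + b/2) * coeff (jacobi_poly n (a - 1) (b - 1)) n * jacobi_moment (a - 1) (b - 1) (Suc n)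
      / (sqrt (jacobi_h (Suc n) (a - 1) (b - 1)) * sqrt (jacobi_h n (a - 1) (b - 1)))"
    using a b coeff_jacobi_poly_top_pos[OF a_minus_1 b_minus_1] jacobi_moment_pos[OF a_minus_1 b_minus_1]
      jacobi_h_pos[OF a_minus_1 b_minus_1]
    by (intro divide_pos_pos mult_pos_pos) auto
  then show ?thesis
    unfolding skew_coeff_eq by (simp only: minus_mult_left minus_divide_left neg_less_0_iff_less)
qed

lemma skew_coeff_sq_eq_ratios:
  "(skew_coeff a b n)\<^sup>2 = (real n + a/2 + b/2)\<^sup>2
     * (jacobi_moment (a - 1) (b - 1) (Suc n) / jacobi_moment (a - 1) (b - 1) n)
     / (coeff (jacobi_poly (Suc n) (a - 1) (b - 1)) (Suc n) / coeff (jacobi_poly n (a - 1) (b - 1)) n)"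
proof -
  define L0 where "L0 = coeff (jacobi_poly n (a - 1) (b - 1)) n"
  define L1 where "L1 = coeff (jacobi_poly (Suc n) (a - 1) (b - 1)) (Suc n)"
  define M0 where "M0 = jacobi_moment (a - 1) (b - 1) n"
  define M1 where "M1 = jacobi_moment (a - 1) (b - 1) (Suc n)"
  have pos: "L0 > 0" "L1 > 0" "M0 > 0" "M1 > 0"
    unfolding L0_def L1_def M0_def M1_def
    using coeff_jacobi_poly_top_pos[OF a_minus_1 b_minus_1] jacobi_moment_pos[OF a_minus_1 b_minus_1] by auto
  define S where "S = sqrt (jacobi_h (Suc n) (a - 1) (b - 1)) * sqrt (jacobi_h n (a - 1) (b - 1))"
  have "S\<^sup>2 = (L1 * M1) * (L0 * M0)"
    using pos by (simp add: S_def jacobi_h_eq_coeff_moment[OF a_minus_1 b_minus_1] L0_def L1_def M0_def M1_def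
        power_mult_distrib)
  moreover have "skew_coeff a b n = - ((real n + a/2 + b/2) * L0 * M1 / S)"
    unfolding skew_coeff_eq L0_def M1_def S_def by (simp only: minus_mult_left minus_divide_left)
  ultimately have "(skew_coeff a b n)\<^sup>2 = (real n + a/2 + b/2)\<^sup>2 * L0\<^sup>2 * M1\<^sup>2 / ((L1 * M1) * (L0 * M0))"
    by (simp only: power2_minus power_mult_distrib power_divide)
  also have "\<dots> = (real n + a/2 + b/2)\<^sup>2 * (M1 / M0) / (L1 / L0)"
    using pos by (simp add: power2_eq_square field_simps)
  finally show ?thesis
    unfolding L0_def L1_def M0_def M1_def .
qed

lemma jacobi_moment_ratio:
  "jacobi_moment (a - 1) (b - 1) (Suc n) / jacobi_moment (a - 1) (b - 1) n
     = 2 * (real n + a) * (real n + b) / ((2 * real n + a + b) * (2 * real n + a + b + 1))"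
proof -
  have "jacobi_moment (a - 1) (b - 1) (Suc n) / jacobi_moment (a - 1) (b - 1) n
      = 2 * ((a - 1) + real n + 1) * ((b - 1) + real n + 1)
        / (((a - 1) + (b - 1) + 2 * real n + 2) * ((a - 1) + (b - 1) + 2 * real n + 3))"
    using jacobi_moment_Suc[OF a_minus_1 b_minus_1, of n] jacobi_moment_pos[OF a_minus_1 b_minus_1, of n]
    by simp
  also have "\<dots> = 2 * (real n + a) * (real n + b) / ((2 * real n + a + b) * (2 * real n + a + b + 1))"
    by (simp add: algebra_simps)
  finally show ?thesis .
qed

lemma coeff_jacobi_poly_top_ratio:
  assumes "n \<ge> 1"
  shows "coeff (jacobi_poly (Suc n) (a - 1) (b - 1)) (Suc n) / coeff (jacobi_poly n (a - 1) (b - 1)) n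
     = (2 * real n + a + b - 1) * (2 * real n + a + b) / (2 * (real n + 1) * (real n + a + b - 1))"
proof -
  have "coeff (jacobi_poly (Suc n) (a - 1) (b - 1)) (Suc n) / coeff (jacobi_poly n (a - 1) (b - 1)) n
      = (2 * real n + (a - 1) + (b - 1) + 1) * (2 * real n + (a - 1) + (b - 1) + 2)
        / (2 * (real n + 1) * (real n + (a - 1) + (b - 1) + 1))"
    using coeff_jacobi_poly_top_Suc[OF a_minus_1 b_minus_1 assms]
      coeff_jacobi_poly_top_pos[OF a_minus_1 b_minus_1, of n]
    by simp
  also have "\<dots> = (2 * real n + a + b - 1) * (2 * real n + a + b) / (2 * (real n + 1) * (real n + a + b - 1))"
    by (simp add: algebra_simps)
  finally show ?thesis .
qed

lemma skew_coeff_sq: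
  assumes "n \<ge> 1"
  shows "(skew_coeff a b n)\<^sup>2 = (real n + 1) * (real n + a) * (real n + b) * (real n + a + b - 1)
     / ((2 * real n + a + b - 1) * (2 * real n + a + b + 1))"
proof -
  define u where "u = 2 * real n + a + b"
  have pos: "u - 1 > 0" "u > 0" "u + 1 > 0" "real n + 1 > 0" "real n + a + b - 1 > 0"
    using a b assms by (auto simp: u_def)
  have "jacobi_moment (a - 1) (b - 1) (Suc n) / jacobi_moment (a - 1) (b - 1) n
      = 2 * (real n + a) * (real n + b) / (u * (u + 1))"
    unfolding jacobi_moment_ratio u_def ..
  moreover have "coeff (jacobi_poly (Suc n) (a - 1) (b - 1)) (Suc n) / coeff (jacobi_poly n (a - 1) (b - 1)) n
      = (u - 1) * u / (2 * (real n + 1) * (real n + a + b - 1))"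
    unfolding coeff_jacobi_poly_top_ratio[OF assms] u_def ..
  moreover have "real n + a/2 + b/2 = u / 2"
    by (simp add: u_def)
  ultimately have "(skew_coeff a b n)\<^sup>2 = (u / 2)\<^sup>2 * (2 * (real n + a) * (real n + b) / (u * (u + 1)))
      / ((u - 1) * u / (2 * (real n + 1) * (real n + a + b - 1)))"
    unfolding skew_coeff_sq_eq_ratios by (simp only:)
  also have "\<dots> = (real n + a) * (real n + b) * (real n + 1) * (real n + a + b - 1) / ((u - 1) * (u + 1))"
  proof -
    have field_identity: "(u / 2)\<^sup>2 * (2 * A * B / (u * w)) / (v * u / (2 * C * D)) = A * B * C * D / (v * w)"
      if "v > 0" "w > 0" "C > 0" "D > 0" for A B C D v w :: real
      using that pos by (simp add: field_simps power2_eq_square)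
    show ?thesis
      by (rule field_identity) (use pos in auto)
  qed
  finally have "(skew_coeff a b n)\<^sup>2
      = (real n + a) * (real n + b) * (real n + 1) * (real n + a + b - 1) / ((u - 1) * (u + 1))" .
  then show ?thesis
    by (simp add: u_def algebra_simps)
qed

end

section \<open>The standard symplectic matrix\<close>

definition symplectic_matrix :: "nat \<Rightarrow> nat \<Rightarrow> real" where
  "symplectic_matrix j k = (if even j then (if k = Suc j then 1 else 0) else (if Suc k = j then -1 else 0))"

lemma sum_symplectic_matrix_row:
  assumes "j < 2 * N"
  shows "(\<Sum>k<2 * N. symplectic_matrix j k * X k) = (if even j then X (Suc j) else - X (j - 1))"
proof (cases "even j")
  case True
  then have "Suc j < 2 * N"
    using assms by presburger
  then show ?thesis
    using True by (simp add: symplectic_matrix_def if_distrib[of "\<lambda>c. c * _"] cong: if_cong)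
next
  case False
  then have "(Suc k = j) = (k = j - 1)" for k
    by auto
  moreover have "j - 1 < 2 * N"
    using assms by simp
  ultimately show ?thesis
    using False by (simp add: symplectic_matrix_def if_distrib[of "\<lambda>c. c * _"] cong: if_cong)
qed

lemma symplectic_matrix_square:
  assumes "i < 2 * N"
  shows "(\<Sum>k<2 * N. symplectic_matrix i k * symplectic_matrix k l) = (if i = l then -1 else 0)"
  unfolding sum_symplectic_matrix_row[OF assms] by (auto simp: symplectic_matrix_def)

lemma is_inverse_matrix_symplectic:
  "is_inverse_matrix (2 * N) symplectic_matrix (\<lambda>j k. - symplectic_matrix j k)"
  unfolding is_inverse_matrix_def using symplectic_matrix_square by (simp add: sum_negf)

lemma is_inverse_matrix_unique:
  assumes "is_inverse_matrix n A mu" "is_inverse_matrix n A nu" "i < n" "l < n"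
  shows "mu i l = nu i l"
proof -
  have "mu i l = (\<Sum>k<n. mu i k * (if k = l then 1 else 0))"
    using assms(4) by (simp add: if_distrib[of "\<lambda>c. _ * c"] cong: if_cong)
  also have "\<dots> = (\<Sum>k<n. mu i k * (\<Sum>m<n. A k m * nu m l))"
    using assms(2,4) by (simp add: is_inverse_matrix_def)
  also have "\<dots> = (\<Sum>k<n. \<Sum>m<n. mu i k * A k m * nu m l)"
    by (simp add: sum_distrib_left mult.assoc)
  also have "\<dots> = (\<Sum>m<n. \<Sum>k<n. mu i k * A k m * nu m l)"
    by (rule sum.swap)
  also have "\<dots> = (\<Sum>m<n. (\<Sum>k<n. mu i k * A k m) * nu m l)"
    by (simp add: sum_distrib_right)
  also have "\<dots> = (\<Sum>m<n. (if i = m then 1 else 0) * nu m l)"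
    using assms(1,3) by (simp add: is_inverse_matrix_def)
  also have "\<dots> = nu i l"
    using assms(3) by (simp add: if_distrib[of "\<lambda>c. c * _"] cong: if_cong)
  finally show ?thesis .
qed

lemma sum_even_odd: "(\<Sum>j<2 * N. f j) = (\<Sum>i<N. f (2 * i) + f (2 * i + (1::nat)))"
  by (induction N) (auto simp: add_ac)

lemma sum_symplectic_form:
  "(\<Sum>j<2 * N. \<Sum>k<2 * N. symplectic_matrix j k * f j * g k)
     = (\<Sum>i<N. f (2 * i) * g (2 * i + 1) - f (2 * i + 1) * g (2 * i))"
proof -
  have "(\<Sum>k<2 * N. symplectic_matrix j k * f j * g k) = f j * (\<Sum>k<2 * N. symplectic_matrix j k * g k)"
    for j
    by (simp add: sum_distrib_left mult_ac)
  then have "(\<Sum>k<2 * N. symplectic_matrix j k * f j * g k) = f j * (if even j then g (Suc j) else - g (j - 1))"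
    if "j < 2 * N" for j
    using sum_symplectic_matrix_row[OF that, of g] by simp
  then have "(\<Sum>j<2 * N. \<Sum>k<2 * N. symplectic_matrix j k * f j * g k)
      = (\<Sum>j<2 * N. f j * (if even j then g (Suc j) else - g (j - 1)))"
    by simp
  then show ?thesis
    unfolding sum_even_odd by simp
qed

lemma sum_pairs_telescope:
  fixes P Q R c :: "nat \<Rightarrow> real"
  assumes P_even: "\<And>m. P (2 * m) = c (2 * m) * Q m - (if m = 0 then 0 else c (2 * m - 1) * Q (m - 1))"
  shows "(\<Sum>i<N. P (2 * i + 1) * R (2 * i + 1) - Q i * (c (2 * i + 1) * R (2 * i + 2) - c (2 * i) * R (2 * i)))
       = (\<Sum>j\<le>2 * N. P j * R j) - c (2 * N) * Q N * R (2 * N)"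
proof (induction N)
  case 0
  show ?case using P_even[of 0] by simp
next
  case (Suc N)
  have P_next: "P (Suc (Suc (2 * N))) = c (Suc (Suc (2 * N))) * Q (Suc N) - c (Suc (2 * N)) * Q N"
    using P_even[of "Suc N"] by simp
  have "2 * Suc N = Suc (Suc (2 * N))" "2 * N + 2 = Suc (Suc (2 * N))" "2 * N + 1 = Suc (2 * N)"
    by simp_all
  then show ?case
    by (simp only: sum.lessThan_Suc sum.atMost_Suc Suc.IH P_next) (simp add: algebra_simps)
qed

section \<open>The functions psi and the kernel\<close>

(* From the three-term relation at index 2i+2: D (p_{2i+2} + c_{2i+1} q_i) = c_{2i+2} p_{2i+3}. *)
primrec eps_poly :: "real \<Rightarrow> real \<Rightarrow> nat \<Rightarrow> real poly" where
  "eps_poly a b 0 = smult (1 / skew_coeff a b 0) (phi_poly a b 0)"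
| "eps_poly a b (Suc i) = smult (1 / skew_coeff a b (2 * i + 2))
      (phi_poly a b (2 * i + 2) + smult (skew_coeff a b (2 * i + 1)) (eps_poly a b i))"

definition psi_poly :: "real \<Rightarrow> real \<Rightarrow> nat \<Rightarrow> real poly" where
  "psi_poly a b n = (if odd n then smult (1 / sqrt 2) (phi_poly a b n) else smult (- 1 / sqrt 2) (eps_poly a b (n div 2)))"

context
  fixes a b :: real
  assumes a: "a > 0" and b: "b > 0"
begin

lemma skew_coeff_nonzero: "skew_coeff a b n \<noteq> 0"
  using skew_coeff_neg[OF a b, of n] by simp

lemma weight_deriv_eps_poly: "weight_deriv (a/2) (b/2) (eps_poly a b i) = phi_poly a b (2 * i + 1)"
proof (induction i)
  case 0
  show ?case
    using skew_coeff_nonzero[of 0] by (simp add: weight_deriv_phi_poly[OF a b])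
next
  case (Suc i)
  have "weight_deriv (a/2) (b/2) (phi_poly a b (2 * i + 2))
      = smult (skew_coeff a b (2 * i + 2)) (phi_poly a b (2 * i + 3)) - smult (skew_coeff a b (2 * i + 1)) (phi_poly a b (2 * i + 1))"
    using weight_deriv_phi_poly[OF a b, of "2 * i + 2"] by (simp add: numeral_3_eq_3)
  then show ?case
    using Suc.IH skew_coeff_nonzero[of "2 * i + 2"] by (simp add: numeral_3_eq_3)
qed

lemma phi_poly_even_eq:
  "phi_poly a b (2 * m) = smult (skew_coeff a b (2 * m)) (eps_poly a b m)
     - (if m = 0 then 0 else smult (skew_coeff a b (2 * m - 1)) (eps_poly a b (m - 1)))"
  using skew_coeff_nonzero[of "2 * m"] by (cases m) (simp_all add: smult_add_right)

lemma jacobi_integral_eps_poly_phi_poly_odd: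
  "jacobi_integral (a - 1) (b - 1) (eps_poly a b i * phi_poly a b (2 * l + 1)) = 0"
proof (induction i)
  case (Suc i)
  have "Suc (2 * i) \<noteq> 2 * l"
    by presburger
  then show ?case
    using Suc.IH a b
    by (simp add: distrib_right phi_poly_orthonormal[OF a b])
qed (simp add: phi_poly_orthonormal[OF a b])

lemma jacobi_integral_psi_poly_phi_poly_odd:
  "jacobi_integral (a - 1) (b - 1) (psi_poly a b j * phi_poly a b (2 * l + 1))
     = (if j = 2 * l + 1 then 1 / sqrt 2 else 0)"
  using jacobi_integral_eps_poly_phi_poly_odd[of "j div 2" l]
  by (auto simp: psi_poly_def phi_poly_orthonormal[OF a b])

lemma jacobi_integral_weight_deriv_phi_poly_odd_odd:
  assumes "odd j" "odd k"
  shows "jacobi_integral (a - 1) (b - 1) (weight_deriv (a/2) (b/2) (phi_poly a b j) * phi_poly a b k) = 0"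
proof -
  have "Suc j \<noteq> k" "j - 1 \<noteq> k"
    using assms by presburger+
  then show ?thesis
    using a b
    by (simp add: weight_deriv_phi_poly[OF a b] left_diff_distrib phi_poly_orthonormal[OF a b])
qed

lemma psi_poly_skew_pairing:
  "2 * jacobi_integral (a - 1) (b - 1) (psi_poly a b j * weight_deriv (a/2) (b/2) (psi_poly a b k))
     = symplectic_matrix j k"
proof (cases "even k")
  case True
  then obtain l where k: "k = 2 * l"
    by blast
  have "weight_deriv (a/2) (b/2) (psi_poly a b k) = smult (- 1 / sqrt 2) (phi_poly a b (2 * l + 1))"
    by (simp add: psi_poly_def k weight_deriv_eps_poly)
  then show ?thesis
    using jacobi_integral_psi_poly_phi_poly_odd[of j l]
    by (auto simp: k symplectic_matrix_def real_sqrt_mult[symmetric]) presburger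
next
  case False
  have skew: "jacobi_integral (a - 1) (b - 1) (psi_poly a b j * weight_deriv (a/2) (b/2) (psi_poly a b k))
      = - jacobi_integral (a - 1) (b - 1) (weight_deriv (a/2) (b/2) (psi_poly a b j) * psi_poly a b k)"
    by (rule jacobi_integral_skew[OF a b])
  show ?thesis
  proof (cases "even j")
    case True
    then obtain i where j: "j = 2 * i"
      by blast
    then show ?thesis
      unfolding skew using False
      by (auto simp: psi_poly_def weight_deriv_eps_poly phi_poly_orthonormal[OF a b] symplectic_matrix_def
          real_sqrt_mult[symmetric])
  next
    case odd_j: False
    then show ?thesis
      unfolding skew using False jacobi_integral_weight_deriv_phi_poly_odd_odd[of j k]
      by (auto simp: psi_poly_def symplectic_matrix_def)
  qed
qed

end

lemma phi4_eq: "phi4 a b j x = jacobi_weight (a/2 - 1) (b/2 - 1) x * poly (phi_poly a b j) x"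
  unfolding phi4_def phi_poly_def jacobi_weight_def by (simp add: poly_jacobi_poly)

context
  fixes a b :: real
  assumes a: "a > 0" and b: "b > 0"
begin

lemma eps_op_phi4_odd:
  assumes "-1 < x" "x < 1"
  shows "eps_op (phi4 a b (2 * i + 1)) x = jacobi_weight (a/2) (b/2) x * poly (eps_poly a b i) x"
proof (rule eps_op_eq_antiderivative[OF _ _ _ _ _ assms])
  fix y :: real assume y: "-1 < y" "y < 1"
  show "((\<lambda>x. jacobi_weight (a/2) (b/2) x * poly (eps_poly a b i) x) has_real_derivative phi4 a b (2 * i + 1) y) (at y)"
    using has_real_derivative_jacobi_weight_poly[OF y, of "a/2" "b/2" "eps_poly a b i"]
    by (simp add: weight_deriv_eps_poly[OF a b] phi4_eq)
  show "isCont (phi4 a b (2 * i + 1)) y"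
    using y by (auto simp: phi4_eq[abs_def] jacobi_weight_def intro!: continuous_intros)
next
  show "set_integrable lborel {-1<..<1} (phi4 a b (2 * i + 1))"
    using a b by (auto simp: phi4_eq[abs_def] intro!: set_integrable_jacobi_weight_poly)
  show "((\<lambda>x. jacobi_weight (a/2) (b/2) x * poly (eps_poly a b i) x) \<longlongrightarrow> 0) (at_right (-1))"
    using b by (intro jacobi_weight_mult_tendsto_left_end[where L = "poly (eps_poly a b i) (-1)"])
      (auto intro!: tendsto_eq_intros)
  show "((\<lambda>x. jacobi_weight (a/2) (b/2) x * poly (eps_poly a b i) x) \<longlongrightarrow> 0) (at_left 1)"
    using a by (intro jacobi_weight_mult_tendsto_right_end[where L = "poly (eps_poly a b i) 1"])
      (auto intro!: tendsto_eq_intros)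
qed

lemma psi4_eq:
  assumes "-1 < x" "x < 1"
  shows "psi4 a b n x = jacobi_weight (a/2) (b/2) x * poly (psi_poly a b n) x"
proof (cases "odd n")
  case True
  then show ?thesis
    using jacobi_weight_times_1mx2[OF assms, of "a/2 - 1" "b/2 - 1"]
    by (simp add: psi4_def psi_poly_def phi4_eq mult_ac)
next
  case False
  then obtain i where "n = 2 * i"
    by blast
  then show ?thesis
    using eps_op_phi4_odd[OF assms, of i] by (simp add: psi4_def psi_poly_def mult_ac)
qed

lemma deriv_psi4:
  assumes "-1 < x" "x < 1"
  shows "deriv (psi4 a b n) x
       = jacobi_weight (a/2 - 1) (b/2 - 1) x * poly (weight_deriv (a/2) (b/2) (psi_poly a b n)) x"
proof (rule DERIV_imp_deriv)
  show "(psi4 a b n has_real_derivative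
      jacobi_weight (a/2 - 1) (b/2 - 1) x * poly (weight_deriv (a/2) (b/2) (psi_poly a b n)) x) (at x)"
    using has_real_derivative_jacobi_weight_poly[OF assms, of "a/2" "b/2" "psi_poly a b n"]
    by (rule has_field_derivative_transform_within_open[where S = "{-1<..<1}"])
       (use assms psi4_eq in auto)
qed

lemma M4_eq_symplectic_matrix: "M4 a b = symplectic_matrix"
proof (intro ext)
  fix j k
  let ?G = "psi_poly a b" and ?D = "weight_deriv (a/2) (b/2)" and ?I = "jacobi_integral (a - 1) (b - 1)"
  have "M4 a b j k = ?I (?G j * ?D (?G k) - ?G k * ?D (?G j))"
    unfolding M4_def jacobi_integral_LBINT
  proof (rule interval_integral_cong)
    fix x assume "x \<in> einterval (min (ereal (-1)) (ereal 1)) (max (ereal (-1)) (ereal 1))"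
    then have x: "-1 < x" "x < 1"
      by auto
    have w: "jacobi_weight (a/2) (b/2) x * jacobi_weight (a/2 - 1) (b/2 - 1) x = jacobi_weight (a - 1) (b - 1) x"
      using jacobi_weight_mult[OF x, of "a/2" "b/2" "a/2 - 1" "b/2 - 1"] by simp
    show "psi4 a b j x * deriv (psi4 a b k) x - psi4 a b k x * deriv (psi4 a b j) x
        = jacobi_weight (a - 1) (b - 1) x * poly (?G j * ?D (?G k) - ?G k * ?D (?G j)) x"
      unfolding psi4_eq[OF x] deriv_psi4[OF x] w[symmetric] by (simp add: algebra_simps)
  qed
  also have "\<dots> = 2 * ?I (?G j * ?D (?G k))"
    using jacobi_integral_skew[OF a b, of "?G k" "?G j"] a b
    by (simp add: mult.commute)
  also have "\<dots> = symplectic_matrix j k"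
    by (rule psi_poly_skew_pairing[OF a b])
  finally show "M4 a b j k = symplectic_matrix j k" .
qed

lemma C4_eq:
  assumes "N \<ge> 1"
  shows "C4 a b N = - skew_coeff a b (2 * N)"
proof -
  have "C4 a b N = sqrt ((skew_coeff a b (2 * N))\<^sup>2)"
    using skew_coeff_sq[OF a b, of "2 * N"] assms by (simp add: C4_def mult_ac)
  then show ?thesis
    using skew_coeff_neg[OF a b, of "2 * N"] by simp
qed

lemma psi4_pair_eq:
  assumes x: "-1 < x" "x < 1" and y: "-1 < y" "y < 1"
  shows "psi4 a b (2 * i) x * deriv (psi4 a b (2 * i + 1)) y - psi4 a b (2 * i + 1) x * deriv (psi4 a b (2 * i)) y
     = jacobi_weight (a/2) (b/2) x * jacobi_weight (a/2 - 1) (b/2 - 1) y / 2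
       * (poly (phi_poly a b (2 * i + 1)) x * poly (phi_poly a b (2 * i + 1)) y
          - poly (eps_poly a b i) x * (skew_coeff a b (2 * i + 1) * poly (phi_poly a b (2 * i + 2)) y
                                       - skew_coeff a b (2 * i) * poly (phi_poly a b (2 * i)) y))"
proof -
  have psi_poly_even: "psi_poly a b (2 * i) = smult (- 1 / sqrt 2) (eps_poly a b i)"
    and psi_poly_odd: "psi_poly a b (2 * i + 1) = smult (1 / sqrt 2) (phi_poly a b (2 * i + 1))"
    by (simp_all add: psi_poly_def)
  have D_phi_poly: "weight_deriv (a/2) (b/2) (phi_poly a b (2 * i + 1))
      = smult (skew_coeff a b (2 * i + 1)) (phi_poly a b (2 * i + 2)) - smult (skew_coeff a b (2 * i)) (phi_poly a b (2 * i))"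
    using weight_deriv_phi_poly[OF a b, of "2 * i + 1"] by simp
  have "(1 / sqrt 2) * (1 / sqrt 2) = (1 / 2 :: real)"
    by (simp add: real_sqrt_mult[symmetric])
  then show ?thesis
    unfolding psi4_eq[OF x] deriv_psi4[OF y] psi_poly_even psi_poly_odd weight_deriv_smult
      weight_deriv_eps_poly[OF a b] D_phi_poly
    by (simp add: algebra_simps)
qed

lemma S4_plus_boundary_term_eq:
  assumes "N \<ge> 1" and x: "-1 < x" "x < 1"
  shows "(1/2) * S4 a b N x y + (1/2) * C4 a b N * eps_op (phi4 a b (2*N+1)) x * phi4 a b (2*N) y
     = jacobi_weight (a/2) (b/2) x * jacobi_weight (a/2 - 1) (b/2 - 1) y / 2
       * ((\<Sum>j\<le>2 * N. poly (phi_poly a b j) x * poly (phi_poly a b j) y)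
          - skew_coeff a b (2 * N) * poly (eps_poly a b N) x * poly (phi_poly a b (2 * N)) y)"
proof -
  define W where "W = jacobi_weight (a/2) (b/2) x"
  define w where "w = jacobi_weight (a/2 - 1) (b/2 - 1) y"
  have "(1 - x\<^sup>2) * phi4 a b j x * phi4 a b j y = W * w * (poly (phi_poly a b j) x * poly (phi_poly a b j) y)"
    for j
    using jacobi_weight_times_1mx2[OF x, of "a/2 - 1" "b/2 - 1"] by (simp add: phi4_eq W_def w_def mult_ac)
  then have "S4 a b N x y = W * w * (\<Sum>j\<le>2 * N. poly (phi_poly a b j) x * poly (phi_poly a b j) y)"
    by (simp add: S4_def sum_distrib_left)
  moreover have "eps_op (phi4 a b (2*N+1)) x = W * poly (eps_poly a b N) x"
    using eps_op_phi4_odd[OF x, of N] by (simp add: W_def)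
  moreover have "phi4 a b (2*N) y = w * poly (phi_poly a b (2 * N)) y"
    by (simp add: phi4_eq w_def)
  ultimately show ?thesis
    unfolding C4_eq[OF assms(1)] W_def[symmetric] w_def[symmetric] by (simp add: algebra_simps)
qed

lemma K4_symplectic_eq:
  assumes "N \<ge> 1" and x: "-1 < x" "x < 1" and y: "-1 < y" "y < 1"
  shows "K4 a b N (\<lambda>j k. - symplectic_matrix j k) x y
       = (1/2) * S4 a b N x y + (1/2) * C4 a b N * eps_op (phi4 a b (2*N+1)) x * phi4 a b (2*N) y"
proof -
  define P where "P j = poly (phi_poly a b j) x" for j
  define R where "R j = poly (phi_poly a b j) y" for j
  define Q where "Q i = poly (eps_poly a b i) x" for i
  define c where "c = skew_coeff a b"
  have P_even: "P (2 * m) = c (2 * m) * Q m - (if m = 0 then 0 else c (2 * m - 1) * Q (m - 1))" for m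
    unfolding P_def Q_def c_def by (subst phi_poly_even_eq[OF a b]) simp
  have "K4 a b N (\<lambda>j k. - symplectic_matrix j k) x y
      = (\<Sum>j<2 * N. \<Sum>k<2 * N. symplectic_matrix j k * psi4 a b j x * deriv (psi4 a b k) y)"
    unfolding K4_def by (simp add: sum_negf)
  also have "\<dots> = (\<Sum>i<N. psi4 a b (2 * i) x * deriv (psi4 a b (2 * i + 1)) y
                         - psi4 a b (2 * i + 1) x * deriv (psi4 a b (2 * i)) y)"
    by (rule sum_symplectic_form)
  also have "\<dots> = jacobi_weight (a/2) (b/2) x * jacobi_weight (a/2 - 1) (b/2 - 1) y / 2
      * (\<Sum>i<N. P (2 * i + 1) * R (2 * i + 1) - Q i * (c (2 * i + 1) * R (2 * i + 2) - c (2 * i) * R (2 * i)))"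
    by (simp only: psi4_pair_eq[OF x y] sum_distrib_left P_def R_def Q_def c_def)
  also have "\<dots> = jacobi_weight (a/2) (b/2) x * jacobi_weight (a/2 - 1) (b/2 - 1) y / 2
      * ((\<Sum>j\<le>2 * N. P j * R j) - c (2 * N) * Q N * R (2 * N))"
    unfolding sum_pairs_telescope[of P c Q, OF P_even] ..
  finally show ?thesis
    unfolding S4_plus_boundary_term_eq[OF assms(1-3)] by (simp only: P_def R_def Q_def c_def)
qed

end

theorem lemma2:
  fixes a b :: real and N :: nat
  assumes "a > 0" and "b > 0" and "N \<ge> 1"
  shows "(\<exists>mu. is_inverse_matrix (2*N) (M4 a b) mu) \<and>
         (\<forall>mu. is_inverse_matrix (2*N) (M4 a b) mu \<longrightarrow>
            (\<forall>x\<in>{-1<..<1}. \<forall>y\<in>{-1<..<1}.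
               K4 a b N mu x y
                 = (1/2) * S4 a b N x y
                   + (1/2) * C4 a b N * eps_op (phi4 a b (2*N+1)) x * phi4 a b (2*N) y))"
proof -
  have inverse: "is_inverse_matrix (2*N) (M4 a b) (\<lambda>j k. - symplectic_matrix j k)"
    unfolding M4_eq_symplectic_matrix[OF assms(1,2)] by (rule is_inverse_matrix_symplectic)
  have K4_eq: "K4 a b N mu x y = K4 a b N (\<lambda>j k. - symplectic_matrix j k) x y"
    if "is_inverse_matrix (2*N) (M4 a b) mu" for mu x y
    unfolding K4_def using is_inverse_matrix_unique[OF that inverse]
    by (intro arg_cong[where f = uminus] sum.cong refl) simp_all
  show ?thesis
  proof (intro conjI allI impI ballI)
    show "\<exists>mu. is_inverse_matrix (2*N) (M4 a b) mu"
      using inverse by blast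
    fix mu and x y :: real
    assume "is_inverse_matrix (2*N) (M4 a b) mu" "x \<in> {-1<..<1}" "y \<in> {-1<..<1}"
    then show "K4 a b N mu x y
        = (1/2) * S4 a b N x y + (1/2) * C4 a b N * eps_op (phi4 a b (2*N+1)) x * phi4 a b (2*N) y"
      unfolding K4_eq[OF \<open>is_inverse_matrix (2*N) (M4 a b) mu\<close>]
      by (intro K4_symplectic_eq[OF assms]) auto
  qed
qed
end
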